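(* Let $\alpha$ be a continuous $\|\cdot\|_1$-dominating normalized gauge norm and let $\mathcal{M}$ be a closed subspace of $H^{\alpha}$. Then $\mathcal{M}\cap H^\infty$ is weak*-closed in $H^\infty$.
   Context: $\mathbb T$ is the unit circle with normalized Lebesgue measure $m$. A norm $\alpha$ on $L^\infty$ is a $\|\cdot\|_1$-dominating normalized gauge norm if $\alpha(1)=1$, $\alpha(|f|)=\alpha(f)$ and $\alpha(f)\ge\|f\|_1$ for all $f\in L^\infty$; it is continuous if $\alpha(\chi_E)\to0$ as $m(E)\to0^+$. It is extended to measurable $f$ by $\alpha(f)=\sup\{\alpha(s): s\text{ simple},0\le s\le|f|\}$. $H^\alpha$ is the $\alpha$-closure of $H^\infty$. The weak* topology on $H^\infty\subset L^\infty=(L^1)^\#$ is the one induced by $L^1$. *)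

theory Defs
  imports "HOL-Analysis.Analysis"
begin

text \<open>The unit circle is parametrised by t \<mapsto> exp(2 pi i t), t in [0,1];
  normalised Lebesgue measure on the circle corresponds to Lebesgue measure on [0,1].
  Functions are represented by representatives f :: real \<Rightarrow> complex.\<close>

abbreviation circ_m :: "real measure" where
  "circ_m \<equiv> lebesgue_on {0..1}"

definition Linf :: "(real \<Rightarrow> complex) set" where
  "Linf = {f. f \<in> borel_measurable circ_m \<and> (\<exists>C. AE x in circ_m. norm (f x) \<le> C)}"

definition norm1 :: "(real \<Rightarrow> complex) \<Rightarrow> real" where
  "norm1 f = (\<integral>x. norm (f x) \<partial>circ_m)"

definition gauge_norm_dom :: "((real \<Rightarrow> complex) \<Rightarrow> real) \<Rightarrow> bool" where
  "gauge_norm_dom \<alpha> \<longleftrightarrow>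
     (\<forall>f\<in>Linf. \<forall>g\<in>Linf. (AE x in circ_m. f x = g x) \<longrightarrow> \<alpha> f = \<alpha> g)
   \<and> (\<forall>f\<in>Linf. \<forall>g\<in>Linf. \<alpha> (\<lambda>x. f x + g x) \<le> \<alpha> f + \<alpha> g)
   \<and> (\<forall>f\<in>Linf. \<forall>c::complex. \<alpha> (\<lambda>x. c * f x) = norm c * \<alpha> f)
   \<and> (\<forall>f\<in>Linf. \<alpha> f = 0 \<longleftrightarrow> (AE x in circ_m. f x = 0))
   \<and> \<alpha> (\<lambda>_. 1) = 1
   \<and> (\<forall>f\<in>Linf. \<alpha> (\<lambda>x. complex_of_real (norm (f x))) = \<alpha> f)
   \<and> (\<forall>f\<in>Linf. \<alpha> f \<ge> norm1 f)"

definition gauge_continuous :: "((real \<Rightarrow> complex) \<Rightarrow> real) \<Rightarrow> bool" where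
  "gauge_continuous \<alpha> \<longleftrightarrow>
     (\<forall>\<epsilon>>0. \<exists>\<delta>>0. \<forall>E\<in>sets circ_m. measure circ_m E < \<delta> \<longrightarrow> \<alpha> (indicator E) < \<epsilon>)"

definition alpha_ext :: "((real \<Rightarrow> complex) \<Rightarrow> real) \<Rightarrow> (real \<Rightarrow> complex) \<Rightarrow> ereal" where
  "alpha_ext \<alpha> f = Sup {ereal (\<alpha> (\<lambda>x. complex_of_real (s x))) | s :: real \<Rightarrow> real.
      simple_function circ_m s \<and> (\<forall>x\<in>space circ_m. 0 \<le> s x \<and> s x \<le> norm (f x))}"

definition Lalpha :: "((real \<Rightarrow> complex) \<Rightarrow> real) \<Rightarrow> (real \<Rightarrow> complex) set" where
  "Lalpha \<alpha> = {f. f \<in> borel_measurable circ_m \<and> alpha_ext \<alpha> f < \<infinity>}"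

text \<open>H-infinity: bounded functions whose negative Fourier coefficients vanish.\<close>
definition Hinf :: "(real \<Rightarrow> complex) set" where
  "Hinf = {f \<in> Linf. \<forall>n::nat. n \<ge> 1 \<longrightarrow>
            (\<integral>t. f t * cis (2 * pi * real n * t) \<partial>circ_m) = 0}"

definition Halpha :: "((real \<Rightarrow> complex) \<Rightarrow> real) \<Rightarrow> (real \<Rightarrow> complex) set" where
  "Halpha \<alpha> = {f \<in> Lalpha \<alpha>. \<forall>\<epsilon>>0. \<exists>h\<in>Hinf. alpha_ext \<alpha> (\<lambda>x. f x - h x) < ereal \<epsilon>}"

definition closed_subspace_Halpha ::
  "((real \<Rightarrow> complex) \<Rightarrow> real) \<Rightarrow> (real \<Rightarrow> complex) set \<Rightarrow> bool" where
  "closed_subspace_Halpha \<alpha> M \<longleftrightarrow>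
     M \<subseteq> Halpha \<alpha>
   \<and> (\<lambda>_. 0) \<in> M
   \<and> (\<forall>f\<in>M. \<forall>g\<in>M. (\<lambda>x. f x + g x) \<in> M)
   \<and> (\<forall>f\<in>M. \<forall>c::complex. (\<lambda>x. c * f x) \<in> M)
   \<and> (\<forall>f\<in>Halpha \<alpha>. (\<forall>\<epsilon>>0. \<exists>g\<in>M. alpha_ext \<alpha> (\<lambda>x. f x - g x) < ereal \<epsilon>) \<longrightarrow> f \<in> M)"

definition weak_star :: "(real \<Rightarrow> complex) topology" where
  "weak_star = topology_generated_by
     {{f \<in> Linf. (\<integral>x. f x * g x \<partial>circ_m) \<in> U} | g U.
        integrable circ_m g \<and> open (U :: complex set)}"

end

theory Submission
  imports Defs "HOL-Library.Function_Algebras"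
begin

text \<open>Let \<open>f \<in> H\<^sup>\<infinity>\<close> lie outside \<open>M\<close>. Since \<open>M\<close> is \<open>\<alpha>\<close>-closed, \<open>f\<close> has positive
  \<open>\<alpha>\<close>-distance \<open>\<epsilon>\<close> from \<open>M \<inter> H\<^sup>\<infinity>\<close>, so by Hahn--Banach there is a real-linear functional
  \<open>\<psi>\<close> on \<open>L\<^sup>\<infinity>\<close> with \<open>|\<psi>| \<le> \<alpha>\<close>, \<open>\<psi> f = \<epsilon>\<close> and \<open>\<psi> = 0\<close> on \<open>M \<inter> H\<^sup>\<infinity>\<close>.
  Continuity of \<open>\<alpha>\<close> makes \<open>A \<mapsto> \<psi> (c 1\<^sub>A)\<close> a bounded charge that is absolutely
  continuous with respect to Lebesgue measure; its positive and negative variations are then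
  measures, and Radon--Nikodym gives an integrable density. Uniform approximation by simple
  functions extends this to \<open>\<psi> h = Re (\<integral> h K)\<close> with \<open>K \<in> L\<^sup>1\<close>. Hence
  \<open>{h. Re (\<integral> h K) > 0}\<close> is a weak* open neighbourhood of \<open>f\<close> missing \<open>M \<inter> H\<^sup>\<infinity>\<close>.\<close>

section \<open>The Hahn--Banach theorem\<close>

locale real_vector_space = vector_space scale
  for scale :: "real \<Rightarrow> 'b::ab_group_add \<Rightarrow> 'b"
begin

definition linear_on :: "'b set \<Rightarrow> ('b \<Rightarrow> real) \<Rightarrow> bool" where
  "linear_on E \<phi> \<longleftrightarrow>
     (\<forall>x\<in>E. \<forall>y\<in>E. \<phi> (x + y) = \<phi> x + \<phi> y) \<and> (\<forall>x\<in>E. \<forall>t. \<phi> (scale t x) = t * \<phi> x)"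

lemma linear_onD:
  assumes "linear_on E \<phi>"
  shows linear_on_add: "x \<in> E \<Longrightarrow> y \<in> E \<Longrightarrow> \<phi> (x + y) = \<phi> x + \<phi> y"
    and linear_on_scale: "x \<in> E \<Longrightarrow> \<phi> (scale t x) = t * \<phi> x"
  using assms unfolding linear_on_def by blast+

lemma linear_on_zero: "linear_on E \<phi> \<Longrightarrow> subspace E \<Longrightarrow> \<phi> 0 = 0"
  using linear_on_scale[of E \<phi> 0 0] subspace_0[of E] by simp

lemma linear_on_sum:
  assumes "linear_on E \<phi>" "subspace E" "\<And>i. i \<in> I \<Longrightarrow> x i \<in> E"
  shows "\<phi> (\<Sum>i\<in>I. scale (t i) (x i)) = (\<Sum>i\<in>I. t i * \<phi> (x i))"
  using assms(3)
  by (induction I rule: infinite_finite_induct)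
    (simp_all add: linear_on_zero[OF assms(1,2)] linear_on_add[OF assms(1)] linear_on_scale[OF assms(1)]
      subspace_scale[OF assms(2)] subspace_sum[OF assms(2)])

lemma linear_on_diff:
  assumes "linear_on E \<phi>" "subspace E" "x \<in> E" "y \<in> E"
  shows "\<phi> (x - y) = \<phi> x - \<phi> y"
  using linear_on_add[OF assms(1,3) subspace_neg[OF assms(2,4)]] linear_on_scale[OF assms(1,4), of "- 1"]
  by simp

definition sublinear_on :: "'b set \<Rightarrow> ('b \<Rightarrow> real) \<Rightarrow> bool" where
  "sublinear_on E p \<longleftrightarrow>
     (\<forall>x\<in>E. \<forall>y\<in>E. p (x + y) \<le> p x + p y) \<and> (\<forall>x\<in>E. \<forall>t\<ge>0. p (scale t x) = t * p x)"

lemma sublinear_onD: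
  assumes "sublinear_on E p"
  shows sublinear_on_add: "x \<in> E \<Longrightarrow> y \<in> E \<Longrightarrow> p (x + y) \<le> p x + p y"
    and sublinear_on_scale: "x \<in> E \<Longrightarrow> t \<ge> 0 \<Longrightarrow> p (scale t x) = t * p x"
  using assms unfolding sublinear_on_def by blast+

lemma sublinear_on_zero: "sublinear_on E p \<Longrightarrow> subspace E \<Longrightarrow> p 0 = 0"
  using sublinear_on_scale[of E p 0 0] subspace_0[of E] by simp

lemma sublinear_on_nonneg:
  assumes "sublinear_on E p" "subspace E" "x \<in> E" "p (- x) = p x"
  shows "0 \<le> p x"
  using sublinear_on_add[OF assms(1,3) subspace_neg[OF assms(2,3)]] assms(4) sublinear_on_zero[OF assms(1,2)]
  by simp

definition linear_graph :: "('b \<times> real) set \<Rightarrow> bool" where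
  "linear_graph G \<longleftrightarrow> G \<noteq> {}
     \<and> (\<forall>x a b. (x, a) \<in> G \<longrightarrow> (x, b) \<in> G \<longrightarrow> a = b)
     \<and> (\<forall>x a y b. (x, a) \<in> G \<longrightarrow> (y, b) \<in> G \<longrightarrow> (x + y, a + b) \<in> G)
     \<and> (\<forall>x a t. (x, a) \<in> G \<longrightarrow> (scale t x, t * a) \<in> G)"

definition dominated_on :: "'b set \<Rightarrow> ('b \<Rightarrow> real) \<Rightarrow> ('b \<times> real) set \<Rightarrow> bool" where
  "dominated_on E p G \<longleftrightarrow> (\<forall>x a. (x, a) \<in> G \<longrightarrow> x \<in> E \<and> a \<le> p x)"

lemma linear_graphD:
  assumes "linear_graph G"
  shows linear_graph_single: "(x, a) \<in> G \<Longrightarrow> (x, b) \<in> G \<Longrightarrow> a = b"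
    and linear_graph_add: "(x, a) \<in> G \<Longrightarrow> (y, b) \<in> G \<Longrightarrow> (x + y, a + b) \<in> G"
    and linear_graph_scale: "(x, a) \<in> G \<Longrightarrow> (scale t x, t * a) \<in> G"
  using assms unfolding linear_graph_def by blast+

lemma linear_graph_Union_chain:
  assumes "C \<noteq> {}" and chain: "\<And>G H. G \<in> C \<Longrightarrow> H \<in> C \<Longrightarrow> G \<subseteq> H \<or> H \<subseteq> G"
    and lin: "\<And>G. G \<in> C \<Longrightarrow> linear_graph G"
  shows "linear_graph (\<Union>C)"
proof -
  have common: "\<exists>G\<in>C. u \<in> G \<and> v \<in> G" if "u \<in> \<Union>C" "v \<in> \<Union>C" for u v
    using that chain by blast
  show ?thesis
    unfolding linear_graph_def
  proof (intro conjI allI impI)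
    show "\<Union>C \<noteq> {}" using \<open>C \<noteq> {}\<close> lin unfolding linear_graph_def by blast
  next
    fix x a b assume "(x, a) \<in> \<Union>C" "(x, b) \<in> \<Union>C"
    with common obtain G where "G \<in> C" "(x, a) \<in> G" "(x, b) \<in> G" by blast
    then show "a = b" using linear_graph_single lin by blast
  next
    fix x a y b assume "(x, a) \<in> \<Union>C" "(y, b) \<in> \<Union>C"
    with common obtain G where "G \<in> C" "(x, a) \<in> G" "(y, b) \<in> G" by blast
    then show "(x + y, a + b) \<in> \<Union>C" using linear_graph_add lin by blast
  next
    fix x a t assume "(x, a) \<in> \<Union>C"
    then obtain G where "G \<in> C" "(x, a) \<in> G" by blast
    then show "(scale t x, t * a) \<in> \<Union>C" using linear_graph_scale lin by blast
  qed
qed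

lemma linear_graph_zero:
  assumes "linear_graph G" shows "(0, 0) \<in> G"
proof -
  obtain x a where "(x, a) \<in> G" using assms unfolding linear_graph_def by auto
  then have "(scale 0 x, 0 * a) \<in> G" by (rule linear_graph_scale[OF assms])
  then show ?thesis by simp
qed

lemma dominated_graph_gap:
  assumes "subspace E" "sublinear_on E p" "linear_graph G" "dominated_on E p G" "x\<^sub>0 \<in> E"
    and "(y, a) \<in> G" "(z, b) \<in> G"
  shows "a - p (y - x\<^sub>0) \<le> p (z + x\<^sub>0) - b"
proof -
  have "y \<in> E" "z \<in> E"
    using assms(4,6,7) unfolding dominated_on_def by blast+
  have "a + b \<le> p (y + z)"
    using assms(4) linear_graph_add[OF assms(3,6,7)] unfolding dominated_on_def by blast
  also have "p (y + z) = p ((y - x\<^sub>0) + (z + x\<^sub>0))" by (simp add: algebra_simps)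
  also have "\<dots> \<le> p (y - x\<^sub>0) + p (z + x\<^sub>0)"
    using \<open>y \<in> E\<close> \<open>z \<in> E\<close> assms(1,5)
    by (intro sublinear_on_add[OF assms(2)]) (simp_all add: subspace_diff subspace_add)
  finally show ?thesis by simp
qed

text \<open>The one-dimensional extension step: the value \<open>c\<close> at \<open>x\<^sub>0\<close> is chosen between
  \<open>sup (\<phi> y - p (y - x\<^sub>0))\<close> and \<open>inf (p (z + x\<^sub>0) - \<phi> z)\<close>.\<close>
lemma dominated_value_exists:
  assumes "subspace E" "sublinear_on E p" "linear_graph G" "dominated_on E p G" "x\<^sub>0 \<in> E"
  obtains c where "\<And>y a t. (y, a) \<in> G \<Longrightarrow> a + t * c \<le> p (y + scale t x\<^sub>0)"
proof -
  have G_dom: "\<And>y a. (y, a) \<in> G \<Longrightarrow> y \<in> E \<and> a \<le> p y"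
    using assms(4) unfolding dominated_on_def by blast
  note p = sublinear_on_add[OF assms(2)] sublinear_on_scale[OF assms(2)]
  note sep = dominated_graph_gap[OF assms]
  define S where "S = {a - p (y - x\<^sub>0) | y a. (y, a) \<in> G}"
  define c where "c = Sup S"
  have "(0, 0) \<in> G" using assms(3) by (rule linear_graph_zero)
  then have "S \<noteq> {}" "bdd_above S" unfolding S_def bdd_above_def using sep by blast+
  then have lower: "a - p (y - x\<^sub>0) \<le> c" and upper: "c \<le> p (y + x\<^sub>0) - a" if "(y, a) \<in> G" for y a
    unfolding c_def using that sep by (auto intro!: cSup_upper cSup_least simp: S_def)
  show thesis
  proof (rule that)
    fix y a and t :: real assume ya: "(y, a) \<in> G"
    have "y \<in> E" "a \<le> p y" using G_dom[OF ya] by blast+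
    consider "t = 0" | "t > 0" | "t < 0" by linarith
    then show "a + t * c \<le> p (y + scale t x\<^sub>0)"
    proof cases
      case 1 then show ?thesis using \<open>a \<le> p y\<close> by simp
    next
      case 2
      have "c \<le> p (scale (1/t) y + x\<^sub>0) - a / t" using upper[OF linear_graph_scale[OF assms(3) ya, of "1/t"]] by simp
      then have "t * c \<le> t * p (scale (1/t) y + x\<^sub>0) - a"
        using 2 by (simp add: field_simps)
      also have "t * p (scale (1/t) y + x\<^sub>0) = p (scale t (scale (1/t) y + x\<^sub>0))"
        using 2 \<open>y \<in> E\<close> assms(1,5) by (simp add: p(2) subspace_add subspace_scale)
      also have "scale t (scale (1/t) y + x\<^sub>0) = y + scale t x\<^sub>0"
        using 2 by (simp add: scale_right_distrib)
      finally show ?thesis by simp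
    next
      case 3
      define s where "s = - t"
      have "s > 0" using 3 by (simp add: s_def)
      have "a / s - p (scale (1/s) y - x\<^sub>0) \<le> c" using lower[OF linear_graph_scale[OF assms(3) ya, of "1/s"]] by simp
      then have "a - s * p (scale (1/s) y - x\<^sub>0) \<le> s * c"
        using \<open>s > 0\<close> by (simp add: field_simps)
      also have "s * p (scale (1/s) y - x\<^sub>0) = p (scale s (scale (1/s) y - x\<^sub>0))"
        using \<open>s > 0\<close> \<open>y \<in> E\<close> assms(1,5) by (simp add: p(2) subspace_diff subspace_scale)
      also have "scale s (scale (1/s) y - x\<^sub>0) = y + scale t x\<^sub>0"
        using \<open>s > 0\<close> by (simp add: scale_right_diff_distrib s_def)
      finally show ?thesis by (simp add: s_def)
    qed
  qed
qed

lemma linear_graph_diff: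
  "linear_graph G \<Longrightarrow> (y, a) \<in> G \<Longrightarrow> (z, b) \<in> G \<Longrightarrow> (y - z, a - b) \<in> G"
  using linear_graph_add[of G y a "- z" "- b"] linear_graph_scale[of G z b "- 1"] by simp

lemma linear_graph_extend_unique:
  assumes G: "linear_graph G" and x\<^sub>0: "x\<^sub>0 \<notin> fst ` G"
    and 1: "(y\<^sub>1, a\<^sub>1) \<in> G" and 2: "(y\<^sub>2, a\<^sub>2) \<in> G"
    and eq: "y\<^sub>1 + scale t\<^sub>1 x\<^sub>0 = y\<^sub>2 + scale t\<^sub>2 x\<^sub>0"
  shows "t\<^sub>1 = t\<^sub>2 \<and> a\<^sub>1 = a\<^sub>2"
proof -
  have y: "y\<^sub>1 - y\<^sub>2 = scale (t\<^sub>2 - t\<^sub>1) x\<^sub>0"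
    using eq by (simp add: algebra_simps)
  have "t\<^sub>1 = t\<^sub>2"
  proof (rule ccontr)
    assume "t\<^sub>1 \<noteq> t\<^sub>2"
    then have "x\<^sub>0 = scale (1 / (t\<^sub>2 - t\<^sub>1)) (y\<^sub>1 - y\<^sub>2)" by (simp add: y)
    then have "(x\<^sub>0, (1 / (t\<^sub>2 - t\<^sub>1)) * (a\<^sub>1 - a\<^sub>2)) \<in> G"
      using linear_graph_scale[OF G linear_graph_diff[OF G 1 2], of "1 / (t\<^sub>2 - t\<^sub>1)"] by simp
    with x\<^sub>0 show False by force
  qed
  with eq have "y\<^sub>1 = y\<^sub>2" by simp
  with linear_graph_single[OF G] 1 2 \<open>t\<^sub>1 = t\<^sub>2\<close> show ?thesis by blast
qed

lemma linear_graph_extend: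
  assumes G: "linear_graph G" and x\<^sub>0: "x\<^sub>0 \<notin> fst ` G"
  shows "linear_graph {(y + scale t x\<^sub>0, a + t * c) | y a t. (y, a) \<in> G}"
    (is "linear_graph ?G'")
proof -
  note add = linear_graph_add[OF G] and scl = linear_graph_scale[OF G]
  note unique = linear_graph_extend_unique[OF G x\<^sub>0]
  show ?thesis
    unfolding linear_graph_def
  proof (intro conjI allI impI)
    obtain y a where "(y, a) \<in> G" using G unfolding linear_graph_def by auto
    then have "(y + scale 0 x\<^sub>0, a + 0 * c) \<in> ?G'" by blast
    then show "?G' \<noteq> {}" by blast
  next
    fix x a b assume "(x, a) \<in> ?G'" "(x, b) \<in> ?G'"
    then show "a = b" using unique by blast
  next
    fix x a y b assume "(x, a) \<in> ?G'" "(y, b) \<in> ?G'"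
    then obtain x' a' s y' b' t where "(x', a') \<in> G" "(y', b') \<in> G"
      and "x = x' + scale s x\<^sub>0" "a = a' + s * c" "y = y' + scale t x\<^sub>0" "b = b' + t * c"
      by blast
    moreover from this have "((x' + y') + scale (s + t) x\<^sub>0, (a' + b') + (s + t) * c) \<in> ?G'"
      using add by blast
    ultimately show "(x + y, a + b) \<in> ?G'" by (simp add: algebra_simps)
  next
    fix x a and t :: real assume "(x, a) \<in> ?G'"
    then obtain x' a' s where "(x', a') \<in> G" "x = x' + scale s x\<^sub>0" "a = a' + s * c"
      by blast
    moreover from this have "(scale t x' + scale (t * s) x\<^sub>0, t * a' + (t * s) * c) \<in> ?G'"
      using scl by blast
    ultimately show "(scale t x, t * a) \<in> ?G'" by (simp add: algebra_simps)
  qed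
qed

lemma maximal_dominated_graph_exists:
  assumes "linear_graph G\<^sub>0" "dominated_on E p G\<^sub>0"
  obtains G where "linear_graph G" "dominated_on E p G" "G\<^sub>0 \<subseteq> G"
    "\<And>H. linear_graph H \<Longrightarrow> dominated_on E p H \<Longrightarrow> G \<subseteq> H \<Longrightarrow> H = G"
proof -
  define A where "A = {G. linear_graph G \<and> dominated_on E p G \<and> G\<^sub>0 \<subseteq> G}"
  have "\<exists>G\<in>A. \<forall>H\<in>A. G \<subseteq> H \<longrightarrow> H = G"
  proof (rule subset_Zorn_nonempty)
    show "A \<noteq> {}" using assms unfolding A_def by blast
  next
    fix C assume "C \<noteq> {}" "subset.chain A C"
    then have "C \<subseteq> A" "\<And>G H. G \<in> C \<Longrightarrow> H \<in> C \<Longrightarrow> G \<subseteq> H \<or> H \<subseteq> G"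
      unfolding subset.chain_def by blast+
    moreover from \<open>C \<subseteq> A\<close> have "\<And>G. G \<in> C \<Longrightarrow> linear_graph G" unfolding A_def by blast
    ultimately have "linear_graph (\<Union>C)" using \<open>C \<noteq> {}\<close> by (intro linear_graph_Union_chain)
    moreover have "dominated_on E p (\<Union>C)"
      using \<open>C \<subseteq> A\<close> unfolding A_def dominated_on_def by blast
    moreover have "G\<^sub>0 \<subseteq> \<Union>C"
      using \<open>C \<subseteq> A\<close> \<open>C \<noteq> {}\<close> unfolding A_def by blast
    ultimately show "\<Union>C \<in> A" unfolding A_def by simp
  qed
  then obtain G where "G \<in> A" and maximal: "\<And>H. H \<in> A \<Longrightarrow> G \<subseteq> H \<Longrightarrow> H = G" by blast
  show thesis
  proof (rule that)
    show "linear_graph G" "dominated_on E p G" "G\<^sub>0 \<subseteq> G" using \<open>G \<in> A\<close> unfolding A_def by simp_all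
    fix H assume "linear_graph H" "dominated_on E p H" "G \<subseteq> H"
    with \<open>G\<^sub>0 \<subseteq> G\<close> have "H \<in> A" unfolding A_def by blast
    then show "H = G" using \<open>G \<subseteq> H\<close> by (rule maximal)
  qed
qed

lemma maximal_dominated_graph_total:
  assumes E: "subspace E" and p: "sublinear_on E p"
    and G: "linear_graph G" "dominated_on E p G"
    and maximal: "\<And>H. linear_graph H \<Longrightarrow> dominated_on E p H \<Longrightarrow> G \<subseteq> H \<Longrightarrow> H = G"
    and "x \<in> E"
  shows "x \<in> fst ` G"
proof (rule ccontr)
  assume x: "x \<notin> fst ` G"
  obtain c where c: "\<And>y a t. (y, a) \<in> G \<Longrightarrow> a + t * c \<le> p (y + scale t x)"
    using dominated_value_exists[OF E p G \<open>x \<in> E\<close>] by blast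
  define H where "H = {(y + scale t x, a + t * c) | y a t. (y, a) \<in> G}"
  have "G \<subseteq> H"
  proof
    fix z assume "z \<in> G"
    moreover obtain y a where "z = (y, a)" by fastforce
    ultimately have "(y + scale 0 x, a + 0 * c) \<in> H" unfolding H_def by blast
    then show "z \<in> H" using \<open>z = (y, a)\<close> by simp
  qed
  moreover have "linear_graph H" unfolding H_def by (rule linear_graph_extend[OF G(1) x])
  moreover have "dominated_on E p H"
    using G(2) c \<open>x \<in> E\<close> E unfolding H_def dominated_on_def
    by (auto intro!: subspace_add subspace_scale)
  ultimately have "H = G" using maximal by blast
  moreover have "(0 + scale 1 x, 0 + 1 * c) \<in> H"
    using linear_graph_zero[OF G(1)] unfolding H_def by blast
  ultimately show False using x by force
qed

theorem hahn_banach: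
  assumes E: "subspace E" and p: "sublinear_on E p"
    and G\<^sub>0: "linear_graph G\<^sub>0" "dominated_on E p G\<^sub>0"
  obtains \<psi> where "linear_on E \<psi>" "\<And>x. x \<in> E \<Longrightarrow> \<psi> x \<le> p x" "\<And>x a. (x, a) \<in> G\<^sub>0 \<Longrightarrow> \<psi> x = a"
proof -
  obtain G where G: "linear_graph G" "dominated_on E p G" "G\<^sub>0 \<subseteq> G"
    and maximal: "\<And>H. linear_graph H \<Longrightarrow> dominated_on E p H \<Longrightarrow> G \<subseteq> H \<Longrightarrow> H = G"
    using maximal_dominated_graph_exists[OF G\<^sub>0] by blast
  have total: "x \<in> fst ` G" if "x \<in> E" for x
    using maximal_dominated_graph_total[OF E p G(1,2) maximal that] .
  define \<psi> where "\<psi> x = (THE a. (x, a) \<in> G)" for x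
  have \<psi>_eq: "\<psi> x = a" if "(x, a) \<in> G" for x a
    unfolding \<psi>_def
    by (rule the_equality) (use that linear_graph_single[OF G(1)] in blast)+
  have graph: "(x, \<psi> x) \<in> G" if "x \<in> E" for x
    using total[OF that] \<psi>_eq by force
  show thesis
  proof
    show "linear_on E \<psi>"
      unfolding linear_on_def
    proof (intro conjI ballI allI)
      fix x y t assume "x \<in> E" "y \<in> E"
      show "\<psi> (x + y) = \<psi> x + \<psi> y" "\<psi> (scale t x) = t * \<psi> x"
        using \<open>x \<in> E\<close> \<open>y \<in> E\<close> graph
        by (blast intro: \<psi>_eq linear_graph_add[OF G(1)] linear_graph_scale[OF G(1)])+
    qed
    show "\<psi> x \<le> p x" if "x \<in> E" for x
      using G(2) graph[OF that] unfolding dominated_on_def by blast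
    show "\<psi> x = a" if "(x, a) \<in> G\<^sub>0" for x a
      using G(3) \<psi>_eq that by blast
  qed
qed

lemma distance_functional_le:
  assumes E: "subspace E" and V: "subspace V" "V \<subseteq> E" and f: "f \<in> E"
    and p: "sublinear_on E p" "\<And>x. x \<in> E \<Longrightarrow> p (- x) = p x"
    and "\<epsilon> > 0" and dist: "\<And>g. g \<in> V \<Longrightarrow> \<epsilon> \<le> p (f - g)" and "g \<in> V"
  shows "t * \<epsilon> \<le> p (g + scale t f)"
proof (cases "t > 0")
  case True
  define g' where "g' = scale (- 1 / t) g"
  have "g' \<in> V" unfolding g'_def using V(1) \<open>g \<in> V\<close> by (rule subspace_scale)
  have "g + scale t f = scale t (f - g')" using True unfolding g'_def by (simp add: algebra_simps)
  then have "p (g + scale t f) = t * p (f - g')"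
    using True \<open>g' \<in> V\<close> V(2) f E by (simp add: sublinear_on_scale[OF p(1)] subset_iff subspace_diff)
  moreover have "t * \<epsilon> \<le> t * p (f - g')" using True dist[OF \<open>g' \<in> V\<close>] by simp
  ultimately show ?thesis by simp
next
  case False
  have "g + scale t f \<in> E" using \<open>g \<in> V\<close> V(2) f E by (auto intro: subspace_add subspace_scale)
  with sublinear_on_nonneg[OF p(1) E] p(2) have "0 \<le> p (g + scale t f)" by blast
  moreover have "t * \<epsilon> \<le> 0" using False \<open>\<epsilon> > 0\<close> by (simp add: mult_nonpos_nonneg)
  ultimately show ?thesis by linarith
qed

lemma separating_functional:
  assumes E: "subspace E" and V: "subspace V" "V \<subseteq> E" and f: "f \<in> E"
    and p: "sublinear_on E p" and p_minus: "\<And>x. x \<in> E \<Longrightarrow> p (- x) = p x"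
    and "\<epsilon> > 0" and dist: "\<And>g. g \<in> V \<Longrightarrow> \<epsilon> \<le> p (f - g)"
  obtains \<psi> where "linear_on E \<psi>" "\<And>x. x \<in> E \<Longrightarrow> \<bar>\<psi> x\<bar> \<le> p x"
    "\<psi> f = \<epsilon>" "\<And>g. g \<in> V \<Longrightarrow> \<psi> g = 0"
proof -
  define G where "G = V \<times> {0 :: real}"
  have G: "linear_graph G"
    unfolding G_def linear_graph_def using V(1) subspace_0[OF V(1)] by (auto simp: subspace_add subspace_scale)
  have "f \<notin> V" using dist[of f] sublinear_on_zero[OF p E] \<open>\<epsilon> > 0\<close> by auto
  then have "f \<notin> fst ` G" unfolding G_def by simp
  define G\<^sub>0 where "G\<^sub>0 = {(g + scale t f, a + t * \<epsilon>) | g a t. (g, a) \<in> G}"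
  have "linear_graph G\<^sub>0" unfolding G\<^sub>0_def using G \<open>f \<notin> fst ` G\<close> by (rule linear_graph_extend)
  moreover have "dominated_on E p G\<^sub>0"
    unfolding dominated_on_def
  proof (intro allI impI)
    fix x a assume "(x, a) \<in> G\<^sub>0"
    then obtain g t where "g \<in> V" "x = g + scale t f" "a = t * \<epsilon>" unfolding G\<^sub>0_def G_def by auto
    then show "x \<in> E \<and> a \<le> p x"
      using distance_functional_le[OF E V f p p_minus \<open>\<epsilon> > 0\<close> dist] V(2) f E
      by (auto intro: subspace_add subspace_scale)
  qed
  ultimately obtain \<psi> where \<psi>: "linear_on E \<psi>" "\<And>x. x \<in> E \<Longrightarrow> \<psi> x \<le> p x"
    and on_G\<^sub>0: "\<And>x a. (x, a) \<in> G\<^sub>0 \<Longrightarrow> \<psi> x = a"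
    using hahn_banach[OF E p] by blast
  show thesis
  proof
    show "linear_on E \<psi>" by (fact \<psi>(1))
    show "\<bar>\<psi> x\<bar> \<le> p x" if "x \<in> E" for x
    proof -
      have "- \<psi> x = \<psi> (- x)" using linear_on_scale[OF \<psi>(1) that, of "- 1"] by simp
      also have "\<dots> \<le> p (- x)" using \<psi>(2) subspace_neg[OF E that] .
      also have "\<dots> = p x" using p_minus[OF that] .
      finally show ?thesis using \<psi>(2)[OF that] by simp
    qed
    have "(0 + scale 1 f, 0 + 1 * \<epsilon>) \<in> G\<^sub>0" unfolding G\<^sub>0_def G_def using subspace_0[OF V(1)] by blast
    then show "\<psi> f = \<epsilon>" using on_G\<^sub>0 by simp
    show "\<psi> g = 0" if "g \<in> V" for g
    proof -
      have "(g + scale 0 f, 0 + 0 * \<epsilon>) \<in> G\<^sub>0" unfolding G\<^sub>0_def G_def using that by blast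
      then show ?thesis using on_G\<^sub>0 by simp
    qed
  qed
qed

end

section \<open>Absolutely continuous charges\<close>

locale abs_continuous_charge = finite_measure M for M :: "'a measure" +
  fixes \<nu> :: "'a set \<Rightarrow> real" and K :: real
  assumes charge_additive:
      "\<And>A B. A \<in> sets M \<Longrightarrow> B \<in> sets M \<Longrightarrow> A \<inter> B = {} \<Longrightarrow> \<nu> (A \<union> B) = \<nu> A + \<nu> B"
    and charge_bounded: "\<And>A. A \<in> sets M \<Longrightarrow> \<bar>\<nu> A\<bar> \<le> K"
    and charge_abs_continuous:
      "\<And>\<epsilon>. \<epsilon> > 0 \<Longrightarrow> \<exists>\<delta>>0. \<forall>A\<in>sets M. measure M A < \<delta> \<longrightarrow> \<bar>\<nu> A\<bar> < \<epsilon>"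
begin

lemma charge_empty: "\<nu> {} = 0"
  using charge_additive[of "{}" "{}"] by simp

lemma charge_diff: "A \<in> sets M \<Longrightarrow> B \<in> sets M \<Longrightarrow> B \<subseteq> A \<Longrightarrow> \<nu> A = \<nu> B + \<nu> (A - B)"
  using charge_additive[of B "A - B"] by (simp add: Un_absorb1)

definition positive_variation :: "'a set \<Rightarrow> real" where
  "positive_variation A = (SUP B \<in> {B \<in> sets M. B \<subseteq> A}. \<nu> B)"

lemma positive_variation_upper: "B \<in> sets M \<Longrightarrow> B \<subseteq> A \<Longrightarrow> \<nu> B \<le> positive_variation A"
  unfolding positive_variation_def
  by (rule cSUP_upper) (auto intro!: bdd_aboveI[of _ K] dest: charge_bounded)

lemma positive_variation_least:
  "(\<And>B. B \<in> sets M \<Longrightarrow> B \<subseteq> A \<Longrightarrow> \<nu> B \<le> c) \<Longrightarrow> positive_variation A \<le> c"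
  unfolding positive_variation_def by (rule cSUP_least) auto

lemma positive_variation_nonneg: "0 \<le> positive_variation A"
  using positive_variation_upper[of "{}" A] charge_empty by simp

lemma positive_variation_empty: "positive_variation {} = 0"
  using positive_variation_least[of "{}" 0] positive_variation_nonneg[of "{}"] by (simp add: charge_empty)

lemma positive_variation_additive:
  assumes A: "A \<in> sets M" and B: "B \<in> sets M" and "A \<inter> B = {}"
  shows "positive_variation (A \<union> B) = positive_variation A + positive_variation B"
proof (rule antisym)
  show "positive_variation (A \<union> B) \<le> positive_variation A + positive_variation B"
  proof (rule positive_variation_least)
    fix C assume C: "C \<in> sets M" "C \<subseteq> A \<union> B"
    then have "\<nu> C = \<nu> (C \<inter> A) + \<nu> (C \<inter> B)"
      using charge_additive[of "C \<inter> A" "C \<inter> B"] A B \<open>A \<inter> B = {}\<close>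
      by (simp add: Int_Un_distrib[symmetric] Int_absorb2 Int_assoc Int_left_commute)
    also have "\<dots> \<le> positive_variation A + positive_variation B"
      using C A B by (intro add_mono positive_variation_upper) auto
    finally show "\<nu> C \<le> positive_variation A + positive_variation B" .
  qed
next
  have "positive_variation A \<le> positive_variation (A \<union> B) - positive_variation B"
  proof (rule positive_variation_least)
    fix C\<^sub>1 assume C\<^sub>1: "C\<^sub>1 \<in> sets M" "C\<^sub>1 \<subseteq> A"
    have "positive_variation B \<le> positive_variation (A \<union> B) - \<nu> C\<^sub>1"
    proof (rule positive_variation_least)
      fix C\<^sub>2 assume C\<^sub>2: "C\<^sub>2 \<in> sets M" "C\<^sub>2 \<subseteq> B"
      have "\<nu> C\<^sub>1 + \<nu> C\<^sub>2 = \<nu> (C\<^sub>1 \<union> C\<^sub>2)"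
        using C\<^sub>1 C\<^sub>2 \<open>A \<inter> B = {}\<close> by (intro charge_additive[symmetric]) auto
      also have "\<dots> \<le> positive_variation (A \<union> B)"
        using C\<^sub>1 C\<^sub>2 by (intro positive_variation_upper) auto
      finally show "\<nu> C\<^sub>2 \<le> positive_variation (A \<union> B) - \<nu> C\<^sub>1" by simp
    qed
    then show "\<nu> C\<^sub>1 \<le> positive_variation (A \<union> B) - positive_variation B" by simp
  qed
  then show "positive_variation A + positive_variation B \<le> positive_variation (A \<union> B)" by simp
qed

lemma positive_variation_abs_continuous:
  assumes "\<epsilon> > 0"
  obtains \<delta> where "\<delta> > 0" "\<And>A. A \<in> sets M \<Longrightarrow> measure M A < \<delta> \<Longrightarrow> positive_variation A \<le> \<epsilon>"
proof -
  obtain \<delta> where "\<delta> > 0" and \<delta>: "\<forall>A\<in>sets M. measure M A < \<delta> \<longrightarrow> \<bar>\<nu> A\<bar> < \<epsilon>"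
    using charge_abs_continuous[OF assms] by blast
  have "positive_variation A \<le> \<epsilon>" if "A \<in> sets M" "measure M A < \<delta>" for A
  proof (rule positive_variation_least)
    fix B assume "B \<in> sets M" "B \<subseteq> A"
    then have "measure M B < \<delta>" using finite_measure_mono[of B A] that by simp
    then show "\<nu> B \<le> \<epsilon>" using \<delta> \<open>B \<in> sets M\<close> by fastforce
  qed
  with \<open>\<delta> > 0\<close> show thesis by (rule that)
qed

lemma positive_variation_countably_additive:
  "countably_additive (sets M) (\<lambda>A. ennreal (positive_variation A))"
proof (rule sets.empty_continuous_imp_countably_additive)
  show "positive (sets M) (\<lambda>A. ennreal (positive_variation A))"
    unfolding positive_def by (simp add: positive_variation_empty)
  show "additive (sets M) (\<lambda>A. ennreal (positive_variation A))"
    unfolding additive_def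
    by (simp add: positive_variation_additive positive_variation_nonneg)
  show "\<forall>A\<in>sets M. ennreal (positive_variation A) \<noteq> \<infinity>" by simp
next
  fix A :: "nat \<Rightarrow> 'a set" assume A: "range A \<subseteq> sets M" "decseq A" "(\<Inter>i. A i) = {}"
  then have measure_A: "(\<lambda>n. measure M (A n)) \<longlonglongrightarrow> 0"
    using finite_Lim_measure_decseq[OF A(1,2)] by simp
  have "(\<lambda>n. positive_variation (A n)) \<longlonglongrightarrow> 0"
  proof (rule LIMSEQ_I)
    fix r :: real assume "r > 0"
    then obtain \<delta> where "\<delta> > 0"
      and \<delta>: "\<And>B. B \<in> sets M \<Longrightarrow> measure M B < \<delta> \<Longrightarrow> positive_variation B \<le> r / 2"
      using positive_variation_abs_continuous[of "r / 2"] by auto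
    obtain n\<^sub>0 where "\<forall>n\<ge>n\<^sub>0. norm (measure M (A n) - 0) < \<delta>"
      using LIMSEQ_D[OF measure_A \<open>\<delta> > 0\<close>] by blast
    then have "norm (positive_variation (A n) - 0) < r" if "n \<ge> n\<^sub>0" for n
      using \<delta>[of "A n"] A(1) that \<open>r > 0\<close> positive_variation_nonneg[of "A n"] by auto
    then show "\<exists>n\<^sub>0. \<forall>n\<ge>n\<^sub>0. norm (positive_variation (A n) - 0) < r" by blast
  qed
  then show "(\<lambda>n. ennreal (positive_variation (A n))) \<longlonglongrightarrow> 0"
    using tendsto_ennrealI by fastforce
qed

lemma positive_variation_null:
  assumes "A \<in> null_sets M" shows "positive_variation A = 0"
proof -
  have "A \<in> sets M" "measure M A = 0" using assms by (auto simp: measure_def null_setsD1)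
  have "positive_variation A \<le> 0 + \<epsilon>" if \<epsilon>: "\<epsilon> > 0" for \<epsilon>
  proof -
    obtain \<delta> where "\<delta> > 0" "\<And>B. B \<in> sets M \<Longrightarrow> measure M B < \<delta> \<Longrightarrow> positive_variation B \<le> \<epsilon>"
      using positive_variation_abs_continuous[OF \<epsilon>] by blast
    with \<open>A \<in> sets M\<close> \<open>measure M A = 0\<close> show ?thesis by simp
  qed
  then show ?thesis using field_le_epsilon positive_variation_nonneg antisym by blast
qed

lemma positive_variation_density:
  obtains k where "integrable M k" "\<And>A. A \<in> sets M \<Longrightarrow> positive_variation A = (\<integral>x. k x * indicator A x \<partial>M)"
proof -
  define N where "N = measure_of (space M) (sets M) (\<lambda>A. ennreal (positive_variation A))"
  have sets_N: "sets N = sets M" unfolding N_def by simp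
  have emeasure_N: "emeasure N A = positive_variation A" if "A \<in> sets M" for A
    unfolding N_def
    by (rule emeasure_measure_of_sigma[OF sets.sigma_algebra_axioms _ positive_variation_countably_additive that])
      (simp add: positive_def positive_variation_empty)
  interpret N: finite_measure N
    by (rule finite_measureI) (simp add: emeasure_N sets_eq_imp_space_eq[OF sets_N])
  have ac: "absolutely_continuous M N"
    unfolding absolutely_continuous_def
  proof
    fix A assume "A \<in> null_sets M"
    then have "A \<in> sets M" "positive_variation A = 0" by (auto intro: positive_variation_null)
    then show "A \<in> null_sets N" by (simp add: null_sets_def sets_N emeasure_N)
  qed
  define k where "k x = enn2real (RN_deriv M N x)" for x
  have RN: "integrable M (\<lambda>x. k x * indicator A x)"
    "positive_variation A = (\<integral>x. k x * indicator A x \<partial>M)" if "A \<in> sets M" for A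
  proof -
    have "integrable N (indicator A :: 'a \<Rightarrow> real)"
      using that sets_N by (intro integrable_real_indicator) (auto simp: less_top[symmetric])
    then show "integrable M (\<lambda>x. k x * indicator A x)"
      unfolding k_def using that
      by (subst RN_deriv_integrable[OF N.sigma_finite_measure_axioms ac sets_N, symmetric]) auto
    have "A \<in> sets N" using that sets_N by simp
    then have "(\<integral>x. indicator A x \<partial>N) = measure N A"
      by (simp add: Int_absorb2 sets.sets_into_space)
    also have "\<dots> = positive_variation A"
      using emeasure_N[OF that] by (simp add: measure_def positive_variation_nonneg)
    finally have "positive_variation A = (\<integral>x. indicator A x \<partial>N)" ..
    also have "\<dots> = (\<integral>x. k x * indicator A x \<partial>M)"
      unfolding k_def using that by (intro RN_deriv_integral[OF N.sigma_finite_measure_axioms ac sets_N]) auto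
    finally show "positive_variation A = (\<integral>x. k x * indicator A x \<partial>M)" .
  qed
  have "integrable M (\<lambda>x. k x * indicator (space M) x) \<longleftrightarrow> integrable M k"
    by (rule Bochner_Integration.integrable_cong) auto
  with RN(1)[OF sets.top] have "integrable M k" by simp
  then show thesis using RN(2) by (rule that)
qed

lemma abs_continuous_charge_uminus: "abs_continuous_charge M (\<lambda>A. - \<nu> A) K"
proof
  show "\<And>A B. A \<in> sets M \<Longrightarrow> B \<in> sets M \<Longrightarrow> A \<inter> B = {} \<Longrightarrow> - \<nu> (A \<union> B) = - \<nu> A + - \<nu> B"
    by (simp add: charge_additive)
  show "\<And>A. A \<in> sets M \<Longrightarrow> \<bar>- \<nu> A\<bar> \<le> K" by (simp add: charge_bounded)
  show "\<And>\<epsilon>. \<epsilon> > 0 \<Longrightarrow> \<exists>\<delta>>0. \<forall>A\<in>sets M. measure M A < \<delta> \<longrightarrow> \<bar>- \<nu> A\<bar> < \<epsilon>"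
    using charge_abs_continuous by simp
qed

lemma jordan_decomposition:
  assumes A: "A \<in> sets M"
  shows "\<nu> A = positive_variation A - abs_continuous_charge.positive_variation M (\<lambda>A. - \<nu> A) A"
proof -
  interpret neg: abs_continuous_charge M "\<lambda>A. - \<nu> A" K by (rule abs_continuous_charge_uminus)
  have "positive_variation A \<le> neg.positive_variation A + \<nu> A"
  proof (rule positive_variation_least)
    fix B assume "B \<in> sets M" "B \<subseteq> A"
    then have "- \<nu> (A - B) \<le> neg.positive_variation A" by (intro neg.positive_variation_upper) (use A in auto)
    then show "\<nu> B \<le> neg.positive_variation A + \<nu> A" using charge_diff[OF A \<open>B \<in> sets M\<close> \<open>B \<subseteq> A\<close>] by simp
  qed
  moreover have "neg.positive_variation A \<le> positive_variation A - \<nu> A"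
  proof (rule neg.positive_variation_least)
    fix B assume "B \<in> sets M" "B \<subseteq> A"
    then have "\<nu> (A - B) \<le> positive_variation A" by (intro positive_variation_upper) (use A in auto)
    then show "- \<nu> B \<le> positive_variation A - \<nu> A" using charge_diff[OF A \<open>B \<in> sets M\<close> \<open>B \<subseteq> A\<close>] by simp
  qed
  ultimately show ?thesis by simp
qed

theorem charge_density:
  obtains k where "integrable M k" "\<And>A. A \<in> sets M \<Longrightarrow> \<nu> A = (\<integral>x. k x * indicator A x \<partial>M)"
proof -
  interpret neg: abs_continuous_charge M "\<lambda>A. - \<nu> A" K by (rule abs_continuous_charge_uminus)
  obtain k\<^sub>1 where k\<^sub>1: "integrable M k\<^sub>1"
    "\<And>A. A \<in> sets M \<Longrightarrow> positive_variation A = (\<integral>x. k\<^sub>1 x * indicator A x \<partial>M)"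
    using positive_variation_density by blast
  obtain k\<^sub>2 where k\<^sub>2: "integrable M k\<^sub>2"
    "\<And>A. A \<in> sets M \<Longrightarrow> neg.positive_variation A = (\<integral>x. k\<^sub>2 x * indicator A x \<partial>M)"
    using neg.positive_variation_density by blast
  show thesis
  proof
    show "integrable M (\<lambda>x. k\<^sub>1 x - k\<^sub>2 x)" using k\<^sub>1(1) k\<^sub>2(1) by simp
    fix A assume A: "A \<in> sets M"
    have "\<nu> A = (\<integral>x. k\<^sub>1 x * indicator A x \<partial>M) - (\<integral>x. k\<^sub>2 x * indicator A x \<partial>M)"
      using jordan_decomposition[OF A] k\<^sub>1(2)[OF A] k\<^sub>2(2)[OF A] by simp
    also have "\<dots> = (\<integral>x. (k\<^sub>1 x - k\<^sub>2 x) * indicator A x \<partial>M)"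
      using A k\<^sub>1(1) k\<^sub>2(1)
      by (simp add: left_diff_distrib integrable_real_mult_indicator)
    finally show "\<nu> A = (\<integral>x. (k\<^sub>1 x - k\<^sub>2 x) * indicator A x \<partial>M)" .
  qed
qed

end

section \<open>Bounded functions and gauge norms on the circle\<close>

lemma integrable_bounded_mult:
  fixes k u :: "'a \<Rightarrow> 'b::{real_normed_field, banach, second_countable_topology}"
  assumes "integrable M k" "u \<in> borel_measurable M" "AE x in M. norm (u x) \<le> B"
  shows "integrable M (\<lambda>x. u x * k x)"
proof (rule Bochner_Integration.integrable_bound)
  show "integrable M (\<lambda>x. B * norm (k x))" using assms(1) by simp
  show "(\<lambda>x. u x * k x) \<in> borel_measurable M" using assms(1,2) by (simp add: borel_measurable_integrable)
  show "AE x in M. norm (u x * k x) \<le> norm (B * norm (k x))"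
    using assms(3)
  proof eventually_elim
    case (elim x)
    then have "norm (u x) * norm (k x) \<le> B * norm (k x)" by (simp add: mult_right_mono)
    then show ?case using abs_ge_self[of "B * norm (k x)"] by (simp add: norm_mult)
  qed
qed

lemma integral_mult_diff_le:
  fixes u v k :: "'a \<Rightarrow> real"
  assumes k: "integrable M k" and u: "integrable M (\<lambda>x. u x * k x)"
    and v: "v \<in> borel_measurable M" "\<And>x. x \<in> space M \<Longrightarrow> \<bar>v x\<bar> \<le> B"
    and uv: "\<And>x. x \<in> space M \<Longrightarrow> \<bar>u x - v x\<bar> \<le> e"
  shows "\<bar>(\<integral>x. u x * k x \<partial>M) - (\<integral>x. v x * k x \<partial>M)\<bar> \<le> e * (\<integral>x. \<bar>k x\<bar> \<partial>M)"
proof -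
  have vk: "integrable M (\<lambda>x. v x * k x)" using k v by (intro integrable_bounded_mult[of _ _ _ B]) auto
  have "(\<integral>x. u x * k x \<partial>M) - (\<integral>x. v x * k x \<partial>M) = (\<integral>x. (u x - v x) * k x \<partial>M)"
    using u vk by (simp add: left_diff_distrib)
  also have "\<bar>\<dots>\<bar> \<le> (\<integral>x. \<bar>(u x - v x) * k x\<bar> \<partial>M)" by (rule integral_abs_bound)
  also have "\<dots> \<le> (\<integral>x. e * \<bar>k x\<bar> \<partial>M)"
  proof (rule integral_mono)
    show "integrable M (\<lambda>x. \<bar>(u x - v x) * k x\<bar>)" using u vk by (simp add: left_diff_distrib)
    show "integrable M (\<lambda>x. e * \<bar>k x\<bar>)" using k by simp
    show "\<bar>(u x - v x) * k x\<bar> \<le> e * \<bar>k x\<bar>" if "x \<in> space M" for x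
      using uv[OF that] by (simp add: abs_mult mult_right_mono)
  qed
  finally show ?thesis by simp
qed

lemma Re_integral_mult:
  fixes h :: "'a \<Rightarrow> complex" and k\<^sub>1 k\<^sub>2 :: "'a \<Rightarrow> real"
  assumes h: "h \<in> borel_measurable M" "\<And>x. norm (h x) \<le> C"
    and k: "integrable M k\<^sub>1" "integrable M k\<^sub>2"
  shows "Re (\<integral>x. h x * (complex_of_real (k\<^sub>1 x) - \<i> * complex_of_real (k\<^sub>2 x)) \<partial>M)
    = (\<integral>x. Re (h x) * k\<^sub>1 x \<partial>M) + (\<integral>x. Im (h x) * k\<^sub>2 x \<partial>M)"
proof -
  have bound: "\<bar>Re (h x)\<bar> \<le> C" "\<bar>Im (h x)\<bar> \<le> C" for x
    using abs_Re_le_cmod[of "h x"] abs_Im_le_cmod[of "h x"] h(2)[of x] by linarith+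
  have "(\<integral>x. Re (h x) * k\<^sub>1 x \<partial>M) + (\<integral>x. Im (h x) * k\<^sub>2 x \<partial>M)
      = (\<integral>x. Re (h x * (complex_of_real (k\<^sub>1 x) - \<i> * complex_of_real (k\<^sub>2 x))) \<partial>M)"
    using h(1) bound k
    by (subst Bochner_Integration.integral_add[symmetric]) (auto intro!: integrable_bounded_mult[of _ _ _ C])
  also have "\<dots> = Re (\<integral>x. h x * (complex_of_real (k\<^sub>1 x) - \<i> * complex_of_real (k\<^sub>2 x)) \<partial>M)"
    using h k by (intro integral_Re integrable_bounded_mult[of _ _ _ C]) auto
  finally show ?thesis ..
qed

lemma simple_uniform_approximation:
  fixes u :: "'a \<Rightarrow> real"
  assumes u: "u \<in> borel_measurable M" "\<And>x. x \<in> space M \<Longrightarrow> \<bar>u x\<bar> \<le> B" and "e > 0"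
  obtains v where "v \<in> borel_measurable M" "finite (v ` space M)" "\<And>x. x \<in> space M \<Longrightarrow> \<bar>u x - v x\<bar> \<le> e"
proof
  define v where "v x = e * real_of_int \<lfloor>u x / e\<rfloor>" for x
  show "v \<in> borel_measurable M" unfolding v_def using u(1) by measurable
  have "v ` space M \<subseteq> (\<lambda>j. e * real_of_int j) ` {\<lfloor>- B / e\<rfloor>..\<lfloor>B / e\<rfloor>}"
  proof
    fix y assume "y \<in> v ` space M"
    then obtain x where "x \<in> space M" "y = v x" by blast
    with u(2)[of x] have "- B \<le> u x" "u x \<le> B" by (simp_all add: abs_le_iff)
    with \<open>e > 0\<close> have "- B / e \<le> u x / e" "u x / e \<le> B / e"
      by (simp_all add: field_simps)
    then show "y \<in> (\<lambda>j. e * real_of_int j) ` {\<lfloor>- B / e\<rfloor>..\<lfloor>B / e\<rfloor>}"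
      unfolding \<open>y = v x\<close> v_def by (intro imageI) (simp add: floor_mono)
  qed
  then show "finite (v ` space M)" by (rule finite_subset) simp
  show "\<bar>u x - v x\<bar> \<le> e" for x
  proof -
    have "real_of_int \<lfloor>u x / e\<rfloor> \<le> u x / e" "u x / e \<le> real_of_int \<lfloor>u x / e\<rfloor> + 1" by linarith+
    then have "e * real_of_int \<lfloor>u x / e\<rfloor> \<le> e * (u x / e)" "e * (u x / e) \<le> e * (real_of_int \<lfloor>u x / e\<rfloor> + 1)"
      using \<open>e > 0\<close> by (intro mult_left_mono; simp)+
    then show ?thesis using \<open>e > 0\<close> by (simp add: v_def abs_le_iff algebra_simps)
  qed
qed

lemma sum_fun_apply: "(\<Sum>i\<in>I. f i) x = (\<Sum>i\<in>I. f i x)"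
  by (induction I rule: infinite_finite_induct) auto

text \<open>Functions are treated as a real vector space: real-linear functionals suffice, since
  the weak* neighbourhoods used below only involve real parts of the pairing.\<close>
definition scale_fun :: "real \<Rightarrow> (real \<Rightarrow> complex) \<Rightarrow> real \<Rightarrow> complex" where
  "scale_fun t f = (\<lambda>x. complex_of_real t * f x)"

interpretation fun_vs: real_vector_space scale_fun
  by unfold_locales (auto simp: scale_fun_def fun_eq_iff algebra_simps)

lemma finite_measure_circ_m: "finite_measure circ_m"
  by (rule finite_measure_lebesgue_on) simp

lemma LinfI:
  assumes "f \<in> borel_measurable circ_m" "\<And>x. x \<in> {0..1} \<Longrightarrow> norm (f x) \<le> C"
  shows "f \<in> Linf"
  unfolding Linf_def using assms by (auto intro!: exI[of _ C])

lemma Linf_measurable: "f \<in> Linf \<Longrightarrow> f \<in> borel_measurable circ_m"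
  unfolding Linf_def by auto

lemma Linf_integrable: "f \<in> Linf \<Longrightarrow> integrable circ_m f"
  unfolding Linf_def by (auto intro: finite_measure.integrable_const_bound[OF finite_measure_circ_m])

lemma Linf_mult:
  assumes f: "f \<in> Linf" and u: "u \<in> borel_measurable circ_m" "\<And>x. x \<in> {0..1} \<Longrightarrow> norm (u x) \<le> B"
  shows "(\<lambda>x. u x * f x) \<in> Linf"
proof -
  obtain C where C: "AE x in circ_m. norm (f x) \<le> C" using f unfolding Linf_def by auto
  have "AE x in circ_m. norm (u x * f x) \<le> B * C"
    using C AE_space
  proof eventually_elim
    case (elim x)
    then have "norm (u x) \<le> B" using u(2) by simp
    then show ?case using elim(1) by (simp add: norm_mult mult_mono')
  qed
  moreover have "(\<lambda>x. u x * f x) \<in> borel_measurable circ_m"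
    using Linf_measurable[OF f] u(1) by (rule borel_measurable_times[rotated])
  ultimately show ?thesis unfolding Linf_def by blast
qed

lemma Linf_add: "f \<in> Linf \<Longrightarrow> g \<in> Linf \<Longrightarrow> (\<lambda>x. f x + g x) \<in> Linf"
proof -
  assume "f \<in> Linf" "g \<in> Linf"
  then obtain C D where "AE x in circ_m. norm (f x) \<le> C" "AE x in circ_m. norm (g x) \<le> D"
    unfolding Linf_def by auto
  then have "AE x in circ_m. norm (f x + g x) \<le> C + D"
    by eventually_elim (meson add_mono norm_triangle_le)
  moreover have "(\<lambda>x. f x + g x) \<in> borel_measurable circ_m"
    using \<open>f \<in> Linf\<close> \<open>g \<in> Linf\<close> by (intro borel_measurable_add Linf_measurable)
  ultimately show ?thesis unfolding Linf_def by blast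
qed

lemma Linf_cmult: "f \<in> Linf \<Longrightarrow> (\<lambda>x. c * f x) \<in> Linf"
  using Linf_mult[of f "\<lambda>_. c" "norm c"] by simp

lemma Linf_diff: "f \<in> Linf \<Longrightarrow> g \<in> Linf \<Longrightarrow> (\<lambda>x. f x - g x) \<in> Linf"
  using Linf_add[of f "\<lambda>x. -1 * g x"] Linf_cmult[of g "-1"] by simp

lemma Linf_const: "(\<lambda>_. c) \<in> Linf"
  by (rule LinfI[of _ "norm c"]) auto

lemma Linf_indicator: "A \<in> sets circ_m \<Longrightarrow> indicator A \<in> Linf"
  by (rule LinfI[of _ 1]) (auto simp: indicator_def)

lemma subspace_Linf: "fun_vs.subspace Linf"
  unfolding fun_vs.subspace_def scale_fun_def plus_fun_def zero_fun_def
  by (simp add: Linf_add Linf_cmult Linf_const)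

lemma Linf_norm:
  assumes "f \<in> Linf" shows "(\<lambda>x. complex_of_real (norm (f x))) \<in> Linf"
proof -
  have "(\<lambda>x. complex_of_real (norm (f x))) \<in> borel_measurable circ_m"
    using Linf_measurable[OF assms] by measurable
  with assms show ?thesis unfolding Linf_def by simp
qed

lemma Linf_bounded_representative:
  assumes "h \<in> Linf"
  obtains h' C where "h' \<in> borel_measurable circ_m" "\<And>x. norm (h' x) \<le> C" "AE x in circ_m. h x = h' x"
proof -
  obtain C where C: "AE x in circ_m. norm (h x) \<le> C" using assms unfolding Linf_def by auto
  define h' where "h' x = (if norm (h x) \<le> C then h x else 0)" for x
  show thesis
  proof
    show "h' \<in> borel_measurable circ_m" unfolding h'_def using Linf_measurable[OF assms] by measurable
    show "norm (h' x) \<le> \<bar>C\<bar>" for x by (auto simp: h'_def)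
    show "AE x in circ_m. h x = h' x" using C by eventually_elim (simp add: h'_def)
  qed
qed

lemma Linf_scaled_real:
  assumes "u \<in> borel_measurable circ_m" "\<And>x. x \<in> {0..1} \<Longrightarrow> \<bar>u x\<bar> \<le> B"
  shows "(\<lambda>x. c * complex_of_real (u x)) \<in> Linf"
  using Linf_cmult[OF LinfI[of "\<lambda>x. complex_of_real (u x)" B]] assms by simp

lemma Hinf_Linf: "Hinf \<subseteq> Linf"
  unfolding Hinf_def by auto

lemma Linf_mult_cis:
  assumes "f \<in> Linf" shows "(\<lambda>t. f t * cis (2 * pi * real n * t)) \<in> Linf"
proof -
  have "(\<lambda>t. cis (2 * pi * real n * t)) \<in> borel_measurable circ_m"
    by (rule continuous_imp_measurable_on_sets_lebesgue) (intro continuous_intros, simp)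
  then have "(\<lambda>t. cis (2 * pi * real n * t) * f t) \<in> Linf" by (rule Linf_mult[OF assms, of _ 1]) simp
  then show ?thesis by (simp add: mult.commute)
qed

lemma subspace_Hinf: "fun_vs.subspace Hinf"
  unfolding fun_vs.subspace_def
proof (intro conjI ballI allI)
  show "0 \<in> Hinf" unfolding Hinf_def zero_fun_def using Linf_const by simp
next
  fix f g assume "f \<in> Hinf" "g \<in> Hinf"
  then have "f \<in> Linf" "g \<in> Linf" using Hinf_Linf by auto
  then show "f + g \<in> Hinf"
    using \<open>f \<in> Hinf\<close> \<open>g \<in> Hinf\<close> unfolding Hinf_def plus_fun_def
    by (simp add: Linf_add distrib_right Linf_integrable Linf_mult_cis)
next
  fix t and f assume "f \<in> Hinf"
  then show "scale_fun t f \<in> Hinf" unfolding Hinf_def scale_fun_def by (simp add: Linf_cmult mult.assoc)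
qed

lemma closed_subspace_Halpha_subspace: "closed_subspace_Halpha \<alpha> M \<Longrightarrow> fun_vs.subspace M"
  unfolding closed_subspace_Halpha_def fun_vs.subspace_def zero_fun_def plus_fun_def scale_fun_def
  by blast

locale gauge_norm =
  fixes \<alpha> :: "(real \<Rightarrow> complex) \<Rightarrow> real"
  assumes gauge_norm_dom: "gauge_norm_dom \<alpha>"
begin

lemma gauge_cong_AE: "f \<in> Linf \<Longrightarrow> g \<in> Linf \<Longrightarrow> (AE x in circ_m. f x = g x) \<Longrightarrow> \<alpha> f = \<alpha> g"
  and gauge_triangle: "f \<in> Linf \<Longrightarrow> g \<in> Linf \<Longrightarrow> \<alpha> (\<lambda>x. f x + g x) \<le> \<alpha> f + \<alpha> g"
  and gauge_scale: "f \<in> Linf \<Longrightarrow> \<alpha> (\<lambda>x. c * f x) = norm c * \<alpha> f"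
  and gauge_one: "\<alpha> (\<lambda>_. 1) = 1"
  and gauge_norm: "f \<in> Linf \<Longrightarrow> \<alpha> (\<lambda>x. complex_of_real (norm (f x))) = \<alpha> f"
  using gauge_norm_dom unfolding gauge_norm_dom_def by blast+

lemma gauge_cong: "f \<in> Linf \<Longrightarrow> g \<in> Linf \<Longrightarrow> (\<And>x. x \<in> {0..1} \<Longrightarrow> f x = g x) \<Longrightarrow> \<alpha> f = \<alpha> g"
  by (rule gauge_cong_AE) auto

lemma gauge_zero: "\<alpha> (\<lambda>_. 0) = 0"
  using gauge_scale[OF Linf_const, of 0 1] by simp

text \<open>The lattice property of \<open>\<alpha>\<close> is not an axiom; it follows from invariance under \<open>f \<mapsto> |f|\<close>
  by writing \<open>|f| = h |g|\<close> with \<open>0 \<le> h \<le> 1\<close> as the mean of the unimodular multiples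
  \<open>(h \<pm> i sqrt(1 - h\<^sup>2)) |g|\<close> of \<open>|g|\<close>.\<close>
lemma gauge_mono:
  assumes f: "f \<in> Linf" and g: "g \<in> Linf" and le: "\<And>x. x \<in> {0..1} \<Longrightarrow> norm (f x) \<le> norm (g x)"
  shows "\<alpha> f \<le> \<alpha> g"
proof -
  define h where "h x = norm (f x) / norm (g x)" for x
  define u where "u s x = Complex (h x) (s * sqrt (1 - (h x)\<^sup>2))" for s :: real and x
  define G where "G x = complex_of_real (norm (g x))" for x
  have h: "0 \<le> h x" "h x \<le> 1" "h x * norm (g x) = norm (f x)" if "x \<in> {0..1}" for x
    using le[OF that] unfolding h_def by (cases "g x = 0"; simp add: divide_le_eq_1)+
  have G: "G \<in> Linf" unfolding G_def using g by (rule Linf_norm)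
  have u_measurable: "u s \<in> borel_measurable circ_m" for s
  proof -
    have "h \<in> borel_measurable circ_m"
      unfolding h_def using Linf_measurable[OF f] Linf_measurable[OF g] by measurable
    then show ?thesis unfolding u_def Complex_eq by measurable
  qed
  have u_norm: "norm (u s x) = 1" if "x \<in> {0..1}" "s\<^sup>2 = 1" for s x
    using h(1,2)[OF that(1)] that(2) by (simp add: u_def cmod_def power_mult_distrib power_le_one)
  have uG: "(\<lambda>x. u s x * G x) \<in> Linf" "\<alpha> (\<lambda>x. u s x * G x) = \<alpha> g" if "s\<^sup>2 = 1" for s
  proof -
    show uG: "(\<lambda>x. u s x * G x) \<in> Linf" using Linf_mult[OF G u_measurable, where B = 1] u_norm that by simp
    have "\<alpha> (\<lambda>x. u s x * G x) = \<alpha> (\<lambda>x. complex_of_real (norm (u s x * G x)))" using gauge_norm[OF uG] ..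
    also have "\<dots> = \<alpha> G"
      using that by (intro gauge_cong Linf_norm uG G) (simp add: norm_mult u_norm G_def)
    also have "\<dots> = \<alpha> g" unfolding G_def by (rule gauge_norm[OF g])
    finally show "\<alpha> (\<lambda>x. u s x * G x) = \<alpha> g" .
  qed
  have "\<alpha> f = \<alpha> (\<lambda>x. complex_of_real (norm (f x)))" using gauge_norm[OF f] ..
  also have "\<dots> = \<alpha> (\<lambda>x. (1/2) * (u 1 x * G x) + (1/2) * (u (-1) x * G x))"
    using h(3) by (intro gauge_cong Linf_norm f Linf_add Linf_cmult uG)
      (auto simp: u_def G_def complex_eq_iff)
  also have "\<dots> \<le> \<alpha> (\<lambda>x. (1/2) * (u 1 x * G x)) + \<alpha> (\<lambda>x. (1/2) * (u (-1) x * G x))"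
    by (intro gauge_triangle Linf_cmult uG) simp_all
  also have "\<dots> = \<alpha> g"
    using gauge_scale[OF uG(1), of 1 "1/2"] gauge_scale[OF uG(1), of "-1" "1/2"] uG(2)[of 1] uG(2)[of "-1"]
    by simp
  finally show ?thesis .
qed

lemma gauge_le_bound:
  assumes f: "f \<in> Linf" and le: "\<And>x. x \<in> {0..1} \<Longrightarrow> norm (f x) \<le> C"
  shows "\<alpha> f \<le> C"
proof -
  have "C \<ge> 0" using order_trans[OF norm_ge_zero le[of 0]] by simp
  have "\<alpha> f \<le> \<alpha> (\<lambda>x. complex_of_real C * 1)" using f le \<open>C \<ge> 0\<close> by (intro gauge_mono Linf_const) auto
  also have "\<dots> = C" using gauge_scale[OF Linf_const, of "complex_of_real C" 1] gauge_one \<open>C \<ge> 0\<close> by simp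
  finally show ?thesis .
qed

lemma gauge_sublinear: "fun_vs.sublinear_on Linf \<alpha>"
  unfolding fun_vs.sublinear_on_def plus_fun_def scale_fun_def
  by (simp add: gauge_triangle gauge_scale)

lemma alpha_ext_le: "f \<in> Linf \<Longrightarrow> alpha_ext \<alpha> f \<le> ereal (\<alpha> f)"
  unfolding alpha_ext_def
proof (rule Sup_least, clarify)
  fix s :: "real \<Rightarrow> real" assume "f \<in> Linf" "simple_function circ_m s"
    and s: "\<forall>x\<in>space circ_m. 0 \<le> s x \<and> s x \<le> norm (f x)"
  have "(\<lambda>x. complex_of_real (s x)) \<in> Linf"
  proof -
    obtain C where "AE x in circ_m. norm (f x) \<le> C" using \<open>f \<in> Linf\<close> unfolding Linf_def by auto
    then have "AE x in circ_m. norm (complex_of_real (s x)) \<le> C"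
      using AE_space by eventually_elim (use s in force)
    moreover have "s \<in> borel_measurable circ_m" by (rule borel_measurable_simple_function) fact
    ultimately show ?thesis unfolding Linf_def by auto
  qed
  then have "\<alpha> (\<lambda>x. complex_of_real (s x)) \<le> \<alpha> f"
    by (rule gauge_mono[OF _ \<open>f \<in> Linf\<close>]) (use s in simp)
  then show "ereal (\<alpha> (\<lambda>x. complex_of_real (s x))) \<le> ereal (\<alpha> f)" by simp
qed

lemma gauge_uminus: "f \<in> Linf \<Longrightarrow> \<alpha> (- f) = \<alpha> f"
  using gauge_scale[of f "-1"] by (simp add: fun_Compl_def)

lemma Hinf_subset_Halpha: "Hinf \<subseteq> Halpha \<alpha>"
proof
  fix f assume "f \<in> Hinf"
  then have "f \<in> Linf" using Hinf_Linf by auto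
  have "alpha_ext \<alpha> (\<lambda>x. f x - f x) < ereal \<epsilon>" if "\<epsilon> > 0" for \<epsilon>
  proof -
    have "alpha_ext \<alpha> (\<lambda>x. f x - f x) \<le> ereal (\<alpha> (\<lambda>_. 0))"
      using alpha_ext_le[OF Linf_const[of 0]] by simp
    also have "\<dots> < ereal \<epsilon>" using that by (simp add: gauge_zero)
    finally show ?thesis .
  qed
  then have "\<forall>\<epsilon>>0. \<exists>h\<in>Hinf. alpha_ext \<alpha> (\<lambda>x. f x - h x) < ereal \<epsilon>" using \<open>f \<in> Hinf\<close> by blast
  moreover have "alpha_ext \<alpha> f < \<infinity>" using alpha_ext_le[OF \<open>f \<in> Linf\<close>] by (rule le_less_trans) simp
  ultimately show "f \<in> Halpha \<alpha>"
    using Linf_measurable[OF \<open>f \<in> Linf\<close>] unfolding Halpha_def Lalpha_def by blast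
qed

lemma closed_subspace_dist:
  assumes M: "closed_subspace_Halpha \<alpha> M" and f: "f \<in> Hinf" "f \<notin> M"
  obtains \<epsilon> where "\<epsilon> > 0" "\<And>g. g \<in> M \<inter> Hinf \<Longrightarrow> \<epsilon> \<le> \<alpha> (\<lambda>x. f x - g x)"
proof -
  have "f \<in> Linf" "f \<in> Halpha \<alpha>" using f Hinf_Linf Hinf_subset_Halpha by auto
  then have "\<not> (\<forall>\<epsilon>>0. \<exists>g\<in>M. alpha_ext \<alpha> (\<lambda>x. f x - g x) < ereal \<epsilon>)"
    using M f(2) unfolding closed_subspace_Halpha_def by blast
  then obtain \<epsilon> where "\<epsilon> > 0" and far: "\<And>g. g \<in> M \<Longrightarrow> ereal \<epsilon> \<le> alpha_ext \<alpha> (\<lambda>x. f x - g x)"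
    by (auto simp: not_less)
  have "\<epsilon> \<le> \<alpha> (\<lambda>x. f x - g x)" if "g \<in> M \<inter> Hinf" for g
  proof -
    have "g \<in> Linf" using that Hinf_Linf by auto
    have "ereal \<epsilon> \<le> ereal (\<alpha> (\<lambda>x. f x - g x))"
      using that by (intro order_trans[OF far alpha_ext_le] Linf_diff \<open>f \<in> Linf\<close> \<open>g \<in> Linf\<close>) auto
    then show ?thesis by simp
  qed
  with \<open>\<epsilon> > 0\<close> show thesis by (rule that)
qed

end

lemma topspace_weak_star: "topspace weak_star = Linf"
proof -
  have "Linf \<in> {{f \<in> Linf. (\<integral>x. f x * g x \<partial>circ_m) \<in> U} | g U. integrable circ_m g \<and> open U}"
    by (intro CollectI exI[of _ "\<lambda>_. 0"] exI[of _ UNIV]) auto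
  then show ?thesis unfolding weak_star_def topology_generated_by_topspace by auto
qed

lemma openin_weak_star:
  assumes "integrable circ_m g" "open U"
  shows "openin weak_star {f \<in> Linf. (\<integral>x. f x * g x \<partial>circ_m) \<in> U}"
  unfolding weak_star_def
  by (rule topology_generated_by_Basis) (intro CollectI exI[of _ g] exI[of _ U] conjI refl assms)

section \<open>Functionals bounded by a continuous gauge norm\<close>

locale continuous_gauge_norm = gauge_norm +
  assumes gauge_continuous: "gauge_continuous \<alpha>"
begin

context
  fixes \<psi> :: "(real \<Rightarrow> complex) \<Rightarrow> real"
  assumes \<psi>_linear: "fun_vs.linear_on Linf \<psi>"
    and \<psi>_bounded: "\<And>h. h \<in> Linf \<Longrightarrow> \<bar>\<psi> h\<bar> \<le> \<alpha> h"
begin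

lemma functional_cong_AE:
  assumes "f \<in> Linf" "g \<in> Linf" "AE x in circ_m. f x = g x"
  shows "\<psi> f = \<psi> g"
proof -
  have "f - g \<in> Linf" using assms(1,2) by (simp add: fun_diff_def Linf_diff)
  have "\<alpha> (f - g) = \<alpha> (\<lambda>_. 0)"
    using assms(3) by (intro gauge_cong_AE \<open>f - g \<in> Linf\<close> Linf_const) auto
  also have "\<dots> = 0" by (rule gauge_zero)
  finally have "\<psi> (f - g) = 0" using \<psi>_bounded[OF \<open>f - g \<in> Linf\<close>] by simp
  then show ?thesis using fun_vs.linear_on_diff[OF \<psi>_linear subspace_Linf assms(1,2)] by simp
qed

lemma indicator_charge:
  assumes "norm c = 1"
  shows "abs_continuous_charge circ_m (\<lambda>A. \<psi> (\<lambda>x. c * indicator A x)) 1"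
proof (intro abs_continuous_charge.intro abs_continuous_charge_axioms.intro finite_measure_circ_m)
  have Linf: "(\<lambda>x. c * indicator A x) \<in> Linf" if "A \<in> sets circ_m" for A
    using that by (intro Linf_cmult Linf_indicator)
  fix A B :: "real set" assume A: "A \<in> sets circ_m" and B: "B \<in> sets circ_m" and "A \<inter> B = {}"
  then have "(\<lambda>x. c * indicator (A \<union> B) x) = (\<lambda>x. c * indicator A x) + (\<lambda>x. c * indicator B x)"
    by (auto simp: fun_eq_iff indicator_def)
  then show "\<psi> (\<lambda>x. c * indicator (A \<union> B) x) = \<psi> (\<lambda>x. c * indicator A x) + \<psi> (\<lambda>x. c * indicator B x)"
    using fun_vs.linear_on_add[OF \<psi>_linear Linf[OF A] Linf[OF B]] by simp
next
  fix A :: "real set" assume A: "A \<in> sets circ_m"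
  then have "\<bar>\<psi> (\<lambda>x. c * indicator A x)\<bar> \<le> \<alpha> (\<lambda>x. c * indicator A x)"
    by (intro \<psi>_bounded Linf_cmult Linf_indicator)
  also have "\<dots> \<le> 1"
    using A assms by (intro gauge_le_bound Linf_cmult Linf_indicator) (auto simp: norm_mult indicator_def)
  finally show "\<bar>\<psi> (\<lambda>x. c * indicator A x)\<bar> \<le> 1" .
next
  fix \<epsilon> :: real assume "\<epsilon> > 0"
  then obtain \<delta> where "\<delta> > 0"
    and \<delta>: "\<And>A. A \<in> sets circ_m \<Longrightarrow> measure circ_m A < \<delta> \<Longrightarrow> \<alpha> (indicator A) < \<epsilon>"
    using gauge_continuous unfolding gauge_continuous_def by blast
  have "\<bar>\<psi> (\<lambda>x. c * indicator A x)\<bar> < \<epsilon>" if "A \<in> sets circ_m" "measure circ_m A < \<delta>" for A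
  proof -
    have "\<bar>\<psi> (\<lambda>x. c * indicator A x)\<bar> \<le> \<alpha> (\<lambda>x. c * indicator A x)"
      using that by (intro \<psi>_bounded Linf_cmult Linf_indicator)
    also have "\<dots> = \<alpha> (indicator A)" using gauge_scale[OF Linf_indicator[OF that(1)]] assms by simp
    also have "\<dots> < \<epsilon>" using \<delta>[OF that] .
    finally show ?thesis .
  qed
  with \<open>\<delta> > 0\<close> show "\<exists>\<delta>>0. \<forall>A\<in>sets circ_m. measure circ_m A < \<delta> \<longrightarrow> \<bar>\<psi> (\<lambda>x. c * indicator A x)\<bar> < \<epsilon>"
    by blast
qed

lemma functional_on_simple:
  assumes k: "\<And>A. A \<in> sets circ_m \<Longrightarrow> \<psi> (\<lambda>x. c * indicator A x) = (\<integral>x. k x * indicator A x \<partial>circ_m)"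
    and "integrable circ_m k" and v: "v \<in> borel_measurable circ_m" "finite (v ` {0..1})"
  shows "\<psi> (\<lambda>x. c * complex_of_real (v x)) = (\<integral>x. v x * k x \<partial>circ_m)"
proof -
  define R where "R = v ` {0..1}"
  define A where "A r = v -` {r} \<inter> {0..1}" for r
  have A: "A r \<in> sets circ_m" for r unfolding A_def using borel_measurable_vimage[OF v(1)] by simp
  have v_sum: "v x = (\<Sum>r\<in>R. r * indicator (A r) x)" if "x \<in> {0..1}" for x
  proof -
    have "(\<Sum>r\<in>R. r * indicator (A r) x) = (\<Sum>r\<in>R. if r = v x then r else 0)"
      using that by (intro sum.cong) (auto simp: A_def)
    also have "\<dots> = v x" using that v(2) unfolding R_def by simp
    finally show ?thesis by simp
  qed
  have "\<bar>v x\<bar> \<le> (\<Sum>r\<in>R. \<bar>r\<bar>)" if "x \<in> {0..1}" for x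
    using that v(2) by (intro member_le_sum[of "v x" R "\<lambda>r. \<bar>r\<bar>", simplified]) (auto simp: R_def)
  then have v_Linf: "(\<lambda>x. c * complex_of_real (v x)) \<in> Linf" using v(1) by (rule Linf_scaled_real[rotated])
  have ind_Linf: "(\<lambda>x. c * indicator (A r) x) \<in> Linf" for r by (intro Linf_cmult Linf_indicator A)
  have "\<psi> (\<lambda>x. c * complex_of_real (v x)) = \<psi> (\<Sum>r\<in>R. scale_fun r (\<lambda>x. c * indicator (A r) x))"
  proof (rule functional_cong_AE)
    show "(\<Sum>r\<in>R. scale_fun r (\<lambda>x. c * indicator (A r) x)) \<in> Linf"
      by (intro fun_vs.subspace_sum[OF subspace_Linf] fun_vs.subspace_scale[OF subspace_Linf] ind_Linf)
    show "AE x in circ_m. c * complex_of_real (v x) = (\<Sum>r\<in>R. scale_fun r (\<lambda>x. c * indicator (A r) x)) x"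
      by (rule AE_I2)
        (auto simp: v_sum sum_fun_apply scale_fun_def sum_distrib_left indicator_def mult_ac intro!: sum.cong)
  qed (fact v_Linf)
  also have "\<dots> = (\<Sum>r\<in>R. r * \<psi> (\<lambda>x. c * indicator (A r) x))"
    using ind_Linf by (rule fun_vs.linear_on_sum[OF \<psi>_linear subspace_Linf])
  also have "\<dots> = (\<Sum>r\<in>R. (\<integral>x. r * (k x * indicator (A r) x) \<partial>circ_m))"
    by (simp add: k A)
  also have "\<dots> = (\<integral>x. (\<Sum>r\<in>R. r * (k x * indicator (A r) x)) \<partial>circ_m)"
    using \<open>integrable circ_m k\<close> A by (intro Bochner_Integration.integral_sum[symmetric] integrable_mult_right integrable_real_mult_indicator)
  also have "\<dots> = (\<integral>x. v x * k x \<partial>circ_m)"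
    by (intro Bochner_Integration.integral_cong) (simp_all add: v_sum sum_distrib_left mult_ac)
  finally show ?thesis .
qed

lemma functional_scaled_diff_le:
  assumes "norm c = 1" and u: "(\<lambda>x. c * complex_of_real (u x)) \<in> Linf"
    and v: "(\<lambda>x. c * complex_of_real (v x)) \<in> Linf" and uv: "\<And>x. x \<in> {0..1} \<Longrightarrow> \<bar>u x - v x\<bar> \<le> e"
  shows "\<bar>\<psi> (\<lambda>x. c * complex_of_real (u x)) - \<psi> (\<lambda>x. c * complex_of_real (v x))\<bar> \<le> e"
proof -
  have uv_Linf: "(\<lambda>x. c * complex_of_real (u x)) - (\<lambda>x. c * complex_of_real (v x)) \<in> Linf"
    unfolding fun_diff_def using u v by (rule Linf_diff)
  have "\<bar>\<psi> (\<lambda>x. c * complex_of_real (u x)) - \<psi> (\<lambda>x. c * complex_of_real (v x))\<bar>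
      = \<bar>\<psi> ((\<lambda>x. c * complex_of_real (u x)) - (\<lambda>x. c * complex_of_real (v x)))\<bar>"
    using fun_vs.linear_on_diff[OF \<psi>_linear subspace_Linf u v] by simp
  also have "\<dots> \<le> \<alpha> ((\<lambda>x. c * complex_of_real (u x)) - (\<lambda>x. c * complex_of_real (v x)))"
    using uv_Linf by (rule \<psi>_bounded)
  also have "\<dots> \<le> e"
    using uv \<open>norm c = 1\<close> by (intro gauge_le_bound[OF uv_Linf])
      (simp add: norm_mult flip: right_diff_distrib of_real_diff)
  finally show ?thesis .
qed

lemma functional_on_bounded:
  assumes "norm c = 1"
    and k: "\<And>A. A \<in> sets circ_m \<Longrightarrow> \<psi> (\<lambda>x. c * indicator A x) = (\<integral>x. k x * indicator A x \<partial>circ_m)"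
    and "integrable circ_m k"
    and u: "u \<in> borel_measurable circ_m" "\<And>x. x \<in> {0..1} \<Longrightarrow> \<bar>u x\<bar> \<le> B"
  shows "\<psi> (\<lambda>x. c * complex_of_real (u x)) = (\<integral>x. u x * k x \<partial>circ_m)"
proof -
  define C where "C = 1 + (\<integral>x. \<bar>k x\<bar> \<partial>circ_m)"
  have "0 \<le> (\<integral>x. \<bar>k x\<bar> \<partial>circ_m)" by simp
  then have "C > 0" unfolding C_def by linarith
  have u_Linf: "(\<lambda>x. c * complex_of_real (u x)) \<in> Linf" using u by (rule Linf_scaled_real)
  have uk: "integrable circ_m (\<lambda>x. u x * k x)"
    using \<open>integrable circ_m k\<close> u by (intro integrable_bounded_mult[of _ _ _ B]) auto
  have approx: "\<bar>\<psi> (\<lambda>x. c * complex_of_real (u x)) - (\<integral>x. u x * k x \<partial>circ_m)\<bar> \<le> C * e"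
    if "e > 0" for e
  proof -
    obtain v where v: "v \<in> borel_measurable circ_m" "finite (v ` {0..1})"
      and uv: "\<And>x. x \<in> {0..1} \<Longrightarrow> \<bar>u x - v x\<bar> \<le> e"
      using simple_uniform_approximation[of u circ_m B e] u \<open>e > 0\<close> by auto
    have v_bound: "\<bar>v x\<bar> \<le> B + e" if "x \<in> {0..1}" for x using u(2)[OF that] uv[OF that] by linarith
    have "\<bar>\<psi> (\<lambda>x. c * complex_of_real (u x)) - \<psi> (\<lambda>x. c * complex_of_real (v x))\<bar> \<le> e"
      using \<open>norm c = 1\<close> u_Linf Linf_scaled_real[OF v(1) v_bound] uv by (rule functional_scaled_diff_le)
    moreover have "\<bar>(\<integral>x. u x * k x \<partial>circ_m) - (\<integral>x. v x * k x \<partial>circ_m)\<bar> \<le> e * (\<integral>x. \<bar>k x\<bar> \<partial>circ_m)"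
      using uk \<open>integrable circ_m k\<close> v(1) v_bound uv
      by (intro integral_mult_diff_le[where B = "B + e"]) auto
    moreover have "\<psi> (\<lambda>x. c * complex_of_real (v x)) = (\<integral>x. v x * k x \<partial>circ_m)"
      using k \<open>integrable circ_m k\<close> v by (rule functional_on_simple)
    ultimately show ?thesis unfolding C_def by (simp add: algebra_simps)
  qed
  have "\<bar>\<psi> (\<lambda>x. c * complex_of_real (u x)) - (\<integral>x. u x * k x \<partial>circ_m)\<bar> \<le> 0 + \<epsilon>"
    if "\<epsilon> > 0" for \<epsilon>
    using approx[of "\<epsilon> / C"] \<open>C > 0\<close> that by simp
  then have "\<bar>\<psi> (\<lambda>x. c * complex_of_real (u x)) - (\<integral>x. u x * k x \<partial>circ_m)\<bar> \<le> 0"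
    by (rule field_le_epsilon)
  then show ?thesis by simp
qed

lemma functional_real_representation:
  assumes "norm c = 1"
  obtains k where "integrable circ_m k"
    "\<And>u B. u \<in> borel_measurable circ_m \<Longrightarrow> (\<And>x. x \<in> {0..1} \<Longrightarrow> \<bar>u x\<bar> \<le> B) \<Longrightarrow>
       \<psi> (\<lambda>x. c * complex_of_real (u x)) = (\<integral>x. u x * k x \<partial>circ_m)"
proof -
  interpret abs_continuous_charge circ_m "\<lambda>A. \<psi> (\<lambda>x. c * indicator A x)" 1
    using assms by (rule indicator_charge)
  obtain k where k: "integrable circ_m k"
    "\<And>A. A \<in> sets circ_m \<Longrightarrow> \<psi> (\<lambda>x. c * indicator A x) = (\<integral>x. k x * indicator A x \<partial>circ_m)"
    using charge_density by blast
  show thesis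
    using that k(1) functional_on_bounded[OF assms k(2) k(1)] by blast
qed

theorem functional_representation:
  obtains K where "integrable circ_m K" "\<And>h. h \<in> Linf \<Longrightarrow> \<psi> h = Re (\<integral>x. h x * K x \<partial>circ_m)"
proof -
  obtain k\<^sub>1 where k\<^sub>1: "integrable circ_m k\<^sub>1"
    "\<And>u B. u \<in> borel_measurable circ_m \<Longrightarrow> (\<And>x. x \<in> {0..1} \<Longrightarrow> \<bar>u x\<bar> \<le> B) \<Longrightarrow>
       \<psi> (\<lambda>x. complex_of_real (u x)) = (\<integral>x. u x * k\<^sub>1 x \<partial>circ_m)"
    using functional_real_representation[of 1] by auto
  obtain k\<^sub>2 where k\<^sub>2: "integrable circ_m k\<^sub>2"
    "\<And>u B. u \<in> borel_measurable circ_m \<Longrightarrow> (\<And>x. x \<in> {0..1} \<Longrightarrow> \<bar>u x\<bar> \<le> B) \<Longrightarrow>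
       \<psi> (\<lambda>x. \<i> * complex_of_real (u x)) = (\<integral>x. u x * k\<^sub>2 x \<partial>circ_m)"
    using functional_real_representation[of \<i>] by auto
  define K where "K x = complex_of_real (k\<^sub>1 x) - \<i> * complex_of_real (k\<^sub>2 x)" for x
  have K: "integrable circ_m K" unfolding K_def using k\<^sub>1(1) k\<^sub>2(1) by simp
  have "\<psi> h = Re (\<integral>x. h x * K x \<partial>circ_m)" if h: "h \<in> Linf" for h
  proof -
    obtain h' C where h'_measurable: "h' \<in> borel_measurable circ_m"
      and h'_norm: "\<And>x. norm (h' x) \<le> C" and "AE x in circ_m. h x = h' x"
      using Linf_bounded_representative[OF h] by blast
    have h'_bound: "\<bar>Re (h' x)\<bar> \<le> C" "\<bar>Im (h' x)\<bar> \<le> C" for x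
      using abs_Re_le_cmod[of "h' x"] abs_Im_le_cmod[of "h' x"] h'_norm[of x] by linarith+
    have Re_Linf: "(\<lambda>x. complex_of_real (Re (h' x))) \<in> Linf"
      and Im_Linf: "(\<lambda>x. \<i> * complex_of_real (Im (h' x))) \<in> Linf"
      using Linf_scaled_real[of "\<lambda>x. Re (h' x)" C 1] Linf_scaled_real[of "\<lambda>x. Im (h' x)" C \<i>]
        h'_measurable h'_bound by simp_all
    have "h' \<in> Linf" using h'_measurable h'_norm by (rule LinfI)
    have "\<psi> h = \<psi> h'" using h \<open>h' \<in> Linf\<close> \<open>AE x in circ_m. h x = h' x\<close> by (rule functional_cong_AE)
    also have "\<dots> = \<psi> ((\<lambda>x. complex_of_real (Re (h' x))) + (\<lambda>x. \<i> * complex_of_real (Im (h' x))))"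
      by (rule arg_cong[where f = \<psi>]) (simp add: fun_eq_iff complex_eq_iff)
    also have "\<dots> = (\<integral>x. Re (h' x) * k\<^sub>1 x \<partial>circ_m) + (\<integral>x. Im (h' x) * k\<^sub>2 x \<partial>circ_m)"
      using fun_vs.linear_on_add[OF \<psi>_linear Re_Linf Im_Linf] h'_measurable h'_bound
      by (simp add: k\<^sub>1(2)[where B = C] k\<^sub>2(2)[where B = C])
    also have "\<dots> = Re (\<integral>x. h' x * K x \<partial>circ_m)"
      unfolding K_def using h'_measurable h'_norm k\<^sub>1(1) k\<^sub>2(1) by (rule Re_integral_mult[symmetric])
    also have "\<dots> = Re (\<integral>x. h x * K x \<partial>circ_m)"
      using h'_measurable Linf_measurable[OF h] borel_measurable_integrable[OF K]
        \<open>AE x in circ_m. h x = h' x\<close>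
      by (subst integral_cong_AE[of _ _ "\<lambda>x. h x * K x"]) (auto elim: eventually_mono)
    finally show ?thesis .
  qed
  with K show thesis by (rule that)
qed

end

lemma separating_integrable:
  assumes V: "fun_vs.subspace V" "V \<subseteq> Linf" and f: "f \<in> Linf" and "\<epsilon> > 0"
    and dist: "\<And>g. g \<in> V \<Longrightarrow> \<epsilon> \<le> \<alpha> (\<lambda>x. f x - g x)"
  obtains K where "integrable circ_m K" "0 < Re (\<integral>x. f x * K x \<partial>circ_m)"
    "\<And>g. g \<in> V \<Longrightarrow> Re (\<integral>x. g x * K x \<partial>circ_m) = 0"
proof -
  have "\<epsilon> \<le> \<alpha> (f - g)" if "g \<in> V" for g using dist[OF that] by (simp add: fun_diff_def)
  then obtain \<psi> where \<psi>: "fun_vs.linear_on Linf \<psi>" "\<And>h. h \<in> Linf \<Longrightarrow> \<bar>\<psi> h\<bar> \<le> \<alpha> h"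
    and "\<psi> f = \<epsilon>" "\<And>g. g \<in> V \<Longrightarrow> \<psi> g = 0"
    using fun_vs.separating_functional[of Linf V f \<alpha> \<epsilon>] subspace_Linf V f gauge_sublinear gauge_uminus
      \<open>\<epsilon> > 0\<close> by blast
  obtain K where "integrable circ_m K" and K: "\<And>h. h \<in> Linf \<Longrightarrow> \<psi> h = Re (\<integral>x. h x * K x \<partial>circ_m)"
    using functional_representation[OF \<psi>] by blast
  show thesis
  proof
    show "integrable circ_m K" by fact
    show "0 < Re (\<integral>x. f x * K x \<partial>circ_m)" using K[OF f] \<open>\<psi> f = \<epsilon>\<close> \<open>\<epsilon> > 0\<close> by simp
    show "Re (\<integral>x. g x * K x \<partial>circ_m) = 0" if "g \<in> V" for g
      using K[of g] \<open>\<And>g. g \<in> V \<Longrightarrow> \<psi> g = 0\<close>[OF that] that V(2) by auto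
  qed
qed

lemma weak_star_separation:
  assumes M: "closed_subspace_Halpha \<alpha> M" and f: "f \<in> Hinf" "f \<notin> M"
  obtains T where "openin (subtopology weak_star Hinf) T" "f \<in> T" "T \<inter> M = {}"
proof -
  obtain \<epsilon> where "\<epsilon> > 0" "\<And>g. g \<in> M \<inter> Hinf \<Longrightarrow> \<epsilon> \<le> \<alpha> (\<lambda>x. f x - g x)"
    using closed_subspace_dist[OF M f] by blast
  moreover have "fun_vs.subspace (M \<inter> Hinf)"
    using closed_subspace_Halpha_subspace[OF M] subspace_Hinf by (rule fun_vs.subspace_inter)
  ultimately obtain K where "integrable circ_m K" "0 < Re (\<integral>x. f x * K x \<partial>circ_m)"
    and annihilates: "\<And>g. g \<in> M \<inter> Hinf \<Longrightarrow> Re (\<integral>x. g x * K x \<partial>circ_m) = 0"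
    using separating_integrable[of "M \<inter> Hinf" f \<epsilon>] f(1) Hinf_Linf by blast
  define T where "T = Hinf \<inter> {h \<in> Linf. (\<integral>x. h x * K x \<partial>circ_m) \<in> {z. 0 < Re z}}"
  have "openin (subtopology weak_star Hinf) T"
    unfolding T_def using \<open>integrable circ_m K\<close>
    by (intro openin_subtopology_Int2 openin_weak_star open_halfspace_Re_gt)
  moreover have "f \<in> T" "T \<inter> M = {}"
    unfolding T_def using f Hinf_Linf \<open>0 < Re _\<close> annihilates by force+
  ultimately show thesis by (rule that)
qed

end

theorem lemma3p9:
  fixes \<alpha> :: "(real \<Rightarrow> complex) \<Rightarrow> real" and M :: "(real \<Rightarrow> complex) set"
  assumes "gauge_norm_dom \<alpha>" and "gauge_continuous \<alpha>"
    and "closed_subspace_Halpha \<alpha> M"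
  shows "closedin (subtopology weak_star Hinf) (M \<inter> Hinf)"
proof -
  interpret continuous_gauge_norm \<alpha> using assms(1,2) by unfold_locales
  have topspace: "topspace (subtopology weak_star Hinf) = Hinf"
    using topspace_weak_star Hinf_Linf by auto
  have "openin (subtopology weak_star Hinf) (Hinf - M \<inter> Hinf)"
  proof (rule openin_subopen[THEN iffD2], intro ballI)
    fix f assume "f \<in> Hinf - M \<inter> Hinf"
    then obtain T where T: "openin (subtopology weak_star Hinf) T" "f \<in> T" "T \<inter> M = {}"
      using weak_star_separation[OF assms(3)] by blast
    moreover have "T \<subseteq> Hinf" using openin_subset[OF T(1)] topspace by simp
    ultimately show "\<exists>T. openin (subtopology weak_star Hinf) T \<and> f \<in> T \<and> T \<subseteq> Hinf - M \<inter> Hinf"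
      by blast
  qed
  then show ?thesis unfolding closedin_def topspace by blast
qed

end
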